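(* Let $M$ be a mode for a program $P_1$, and assume that $P_1$ is safe w.r.t. $M$ and $P_1$ satisfies $M$. Let $C_1: H\leftarrow G_1,G_2,t_1\neq t_2,G_3$ be a clause in $P_1$, and let $P_2$ be the program derived from $P_1$ by replacing $C_1$ by the clause $C_2: H\leftarrow G_1,t_1\neq t_2,G_2,G_3$. Then (i) $P_2$ is safe w.r.t. $M$, (ii) $P_2$ satisfies $M$, and (iii) for each non-basic atom $A$ which satisfies $M$, $A$ succeeds in $P_1$ iff $A$ succeeds in $P_2$.
   Context: Syntax. Predicate symbols $\mathit{true}$, $=$, $\neq$ are basic, all others non-basic; function symbols form an infinite set. Basic atoms: $\mathit{true}$, $t_1=t_2$, $t_1\neq t_2$ (disequation); non-basic atoms: $p(t_1,\dots,t_m)$ with $p$ non-basic. A goal is a conjunction of atoms ("," associative, neutral element $\mathit{true}$). A clause $C$ is $A\leftarrow G$ with non-basic head $hd(C)=A$ and body $bd(C)=G$; a program is a set of clauses. All mgu's are relevant and idempotent. A variable $X$ is a local variable of goal $G$ in clause $H\leftarrow G_1,G,G_2$ iff $X\in vars(G)-vars(H,G_1,G_2)$. Operational semantics (for program $P$): (1) $(t_1=t_2,G)\longmapsto_P G\vartheta$ if $t_1,t_2$ unify with mgu $\vartheta$; (2) $(t_1\neq t_2,G)\longmapsto_P G$ if $t_1,t_2$ are not unifiable; (3) $(A,G)\longmapsto_P(bd(C),G)\vartheta$ if $A$ is non-basic, $C$ is a renamed apart (fresh variables) clause of $P$ and $\vartheta$ is an mgu of $A$ and $hd(C)$. A goal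 $G_0$ succeeds in $P$ iff $G_0\longmapsto_P\cdots\longmapsto_P\mathit{true}$. $\longmapsto^*_P$ is the reflexive-transitive closure. Modes. A mode for a non-basic predicate $p$ of arity $h$ is $p(m_1,\dots,m_h)$, $m_i\in\{+,?\}$; argument $t_i$ of $p(t_1,\dots,t_h)$ is an input argument iff $m_i=+$, and variables in input arguments are input variables of the atom. A mode for a program is a set containing exactly one mode for each non-basic predicate occurring in it. An atom satisfies $M$ iff $M$ has a mode for its predicate and its input arguments are ground. A program $P$ satisfies $M$ iff for every non-basic atom $A_0$ satisfying $M$ and every non-basic atom $A$ and goal $G$ with $A_0\longmapsto^*_P(A,G)$, $A$ satisfies $M$. A clause $C$ is safe w.r.t. $M$ iff every variable of every disequation $t_1\neq t_2$ in $bd(C)$ is an input variable of $hd(C)$ or a local variable of $t_1\neq t_2$ in $C$; a program is safe iff all its clauses are. *)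

theory Defs
  imports Main "HOL-Library.Infinite_Typeclass"
begin

text \<open>Variables are natural numbers (an infinite supply, needed for renaming apart);
  function symbols range over an infinite type 'f (arity is given by the argument list).\<close>

datatype 'f "term" = Var nat | Fn 'f "'f term list"

fun tvars :: "'f term \<Rightarrow> nat set" where
  "tvars (Var x) = {x}"
| "tvars (Fn f ts) = (\<Union>t\<in>set ts. tvars t)"

type_synonym 'f subst = "nat \<Rightarrow> 'f term"

fun tsubst :: "'f term \<Rightarrow> 'f subst \<Rightarrow> 'f term" where
  "tsubst (Var x) \<sigma> = \<sigma> x"
| "tsubst (Fn f ts) \<sigma> = Fn f (map (\<lambda>t. tsubst t \<sigma>) ts)"

definition ground :: "'f term \<Rightarrow> bool" where
  "ground t \<longleftrightarrow> tvars t = {}"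

text \<open>Atoms occurring in goals. The basic atom true is the neutral element of
  conjunction, so goals are lists of atoms and true is the empty goal.\<close>

datatype ('p, 'f) atom =
    Eq "'f term" "'f term"
  | Neq "'f term" "'f term"
  | Pred 'p "'f term list"

type_synonym ('p, 'f) goal = "('p, 'f) atom list"

fun nonbasic :: "('p, 'f) atom \<Rightarrow> bool" where
  "nonbasic (Pred p ts) = True"
| "nonbasic _ = False"

fun avars :: "('p, 'f) atom \<Rightarrow> nat set" where
  "avars (Eq s t) = tvars s \<union> tvars t"
| "avars (Neq s t) = tvars s \<union> tvars t"
| "avars (Pred p ts) = (\<Union>t\<in>set ts. tvars t)"

definition gvars :: "('p, 'f) goal \<Rightarrow> nat set" where
  "gvars G = (\<Union>A\<in>set G. avars A)"

fun asubst :: "('p, 'f) atom \<Rightarrow> 'f subst \<Rightarrow> ('p, 'f) atom" where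
  "asubst (Eq s t) \<sigma> = Eq (tsubst s \<sigma>) (tsubst t \<sigma>)"
| "asubst (Neq s t) \<sigma> = Neq (tsubst s \<sigma>) (tsubst t \<sigma>)"
| "asubst (Pred p ts) \<sigma> = Pred p (map (\<lambda>t. tsubst t \<sigma>) ts)"

definition gsubst :: "('p, 'f) goal \<Rightarrow> 'f subst \<Rightarrow> ('p, 'f) goal" where
  "gsubst G \<sigma> = map (\<lambda>A. asubst A \<sigma>) G"

text \<open>A clause is a pair (head, body); the head is a non-basic atom p(ts),
  represented by the pair (p, ts). A program is a set of clauses.\<close>

type_synonym ('p, 'f) clause = "('p \<times> 'f term list) \<times> ('p, 'f) goal"

definition hd_atom :: "('p, 'f) clause \<Rightarrow> ('p, 'f) atom" where
  "hd_atom C = Pred (fst (fst C)) (snd (fst C))"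

definition bd :: "('p, 'f) clause \<Rightarrow> ('p, 'f) goal" where
  "bd C = snd C"

definition cvars :: "('p, 'f) clause \<Rightarrow> nat set" where
  "cvars C = avars (hd_atom C) \<union> gvars (bd C)"

definition rename_term :: "(nat \<Rightarrow> nat) \<Rightarrow> 'f term \<Rightarrow> 'f term" where
  "rename_term \<rho> t = tsubst t (\<lambda>x. Var (\<rho> x))"

definition rename_clause :: "(nat \<Rightarrow> nat) \<Rightarrow> ('p, 'f) clause \<Rightarrow> ('p, 'f) clause" where
  "rename_clause \<rho> C =
     ((fst (fst C), map (rename_term \<rho>) (snd (fst C))), gsubst (bd C) (\<lambda>x. Var (\<rho> x)))"

definition unifies :: "'f subst \<Rightarrow> ('f term \<times> 'f term) list \<Rightarrow> bool" where
  "unifies \<sigma> E \<longleftrightarrow> (\<forall>(s, t)\<in>set E. tsubst s \<sigma> = tsubst t \<sigma>)"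

definition eqvars :: "('f term \<times> 'f term) list \<Rightarrow> nat set" where
  "eqvars E = (\<Union>(s, t)\<in>set E. tvars s \<union> tvars t)"

definition is_mgu :: "'f subst \<Rightarrow> ('f term \<times> 'f term) list \<Rightarrow> bool" where
  "is_mgu \<sigma> E \<longleftrightarrow>
     unifies \<sigma> E
   \<and> (\<forall>\<tau>. unifies \<tau> E \<longrightarrow> (\<exists>\<rho>. \<forall>x. \<tau> x = tsubst (\<sigma> x) \<rho>))
   \<and> (\<forall>x. tsubst (\<sigma> x) \<sigma> = \<sigma> x)
   \<and> (\<forall>x. \<sigma> x \<noteq> Var x \<longrightarrow> x \<in> eqvars E \<and> tvars (\<sigma> x) \<subseteq> eqvars E)"

fun atom_eqs :: "('p, 'f) atom \<Rightarrow> ('p, 'f) atom \<Rightarrow> ('f term \<times> 'f term) list option" where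
  "atom_eqs (Pred p ss) (Pred q ts) =
     (if p = q \<and> length ss = length ts then Some (zip ss ts) else None)"
| "atom_eqs _ _ = None"

inductive step :: "('p, 'f) clause set \<Rightarrow> ('p, 'f) goal \<Rightarrow> ('p, 'f) goal \<Rightarrow> bool" for P where
  eq: "is_mgu \<theta> [(t1, t2)] \<Longrightarrow> step P (Eq t1 t2 # G) (gsubst G \<theta>)"
| neq: "\<not> (\<exists>\<tau>. tsubst t1 \<tau> = tsubst t2 \<tau>) \<Longrightarrow> step P (Neq t1 t2 # G) G"
| res: "\<lbrakk> nonbasic A; C \<in> P; inj \<rho>; C' = rename_clause \<rho> C;
          cvars C' \<inter> gvars (A # G) = {};
          atom_eqs A (hd_atom C') = Some E; is_mgu \<theta> E \<rbrakk>
        \<Longrightarrow> step P (A # G) (gsubst (bd C' @ G) \<theta>)"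

definition steps :: "('p, 'f) clause set \<Rightarrow> ('p, 'f) goal \<Rightarrow> ('p, 'f) goal \<Rightarrow> bool" where
  "steps P = (step P)\<^sup>*\<^sup>*"

definition succeeds :: "('p, 'f) goal \<Rightarrow> ('p, 'f) clause set \<Rightarrow> bool" where
  "succeeds G P \<longleftrightarrow> steps P G []"

text \<open>A mode for predicate p of arity h is represented by (p, ms) with ms a bool list
  of length h; ms ! i = True means m_(i+1) = +, False means ?.
  A mode (for a program) is a set of such pairs.\<close>

type_synonym 'p mode = "('p \<times> bool list) set"

definition preds_goal :: "('p, 'f) goal \<Rightarrow> ('p \<times> nat) set" where
  "preds_goal G = {(p, length ts) | p ts. Pred p ts \<in> set G}"

definition preds_prog :: "('p, 'f) clause set \<Rightarrow> ('p \<times> nat) set" where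
  "preds_prog P = (\<Union>C\<in>P. preds_goal (hd_atom C # bd C))"

definition mode_for_program :: "'p mode \<Rightarrow> ('p, 'f) clause set \<Rightarrow> bool" where
  "mode_for_program M P \<longleftrightarrow>
     (\<forall>(p, ms)\<in>M. (p, length ms) \<in> preds_prog P)
   \<and> (\<forall>(p, n)\<in>preds_prog P. \<exists>!ms. (p, ms) \<in> M \<and> length ms = n)"

fun atom_sat :: "('p, 'f) atom \<Rightarrow> 'p mode \<Rightarrow> bool" where
  "atom_sat (Pred p ts) M \<longleftrightarrow>
     (\<exists>ms. (p, ms) \<in> M \<and> length ms = length ts \<and>
           (\<forall>i<length ts. ms ! i \<longrightarrow> ground (ts ! i)))"
| "atom_sat _ M \<longleftrightarrow> False"

definition prog_sat :: "('p, 'f) clause set \<Rightarrow> 'p mode \<Rightarrow> bool" where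
  "prog_sat P M \<longleftrightarrow>
     (\<forall>A0 A G. nonbasic A0 \<longrightarrow> atom_sat A0 M \<longrightarrow> steps P [A0] (A # G) \<longrightarrow>
        nonbasic A \<longrightarrow> atom_sat A M)"

fun input_vars :: "'p mode \<Rightarrow> ('p, 'f) atom \<Rightarrow> nat set" where
  "input_vars M (Pred p ts) =
     {x. \<exists>i ms. i < length ts \<and> (p, ms) \<in> M \<and> length ms = length ts \<and> ms ! i
               \<and> x \<in> tvars (ts ! i)}"
| "input_vars M _ = {}"

definition local_var :: "nat \<Rightarrow> nat \<Rightarrow> ('p, 'f) clause \<Rightarrow> bool" where
  "local_var x i C \<longleftrightarrow> i < length (bd C) \<and> x \<in> avars (bd C ! i) \<and>
     x \<notin> avars (hd_atom C) \<and> (\<forall>j<length (bd C). j \<noteq> i \<longrightarrow> x \<notin> avars (bd C ! j))"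

definition clause_safe :: "('p, 'f) clause \<Rightarrow> 'p mode \<Rightarrow> bool" where
  "clause_safe C M \<longleftrightarrow>
     (\<forall>i<length (bd C). \<forall>t1 t2. bd C ! i = Neq t1 t2 \<longrightarrow>
        (\<forall>x \<in> tvars t1 \<union> tvars t2. x \<in> input_vars M (hd_atom C) \<or> local_var x i C))"

definition prog_safe :: "('p, 'f) clause set \<Rightarrow> 'p mode \<Rightarrow> bool" where
  "prog_safe P M \<longleftrightarrow> (\<forall>C\<in>P. clause_safe C M)"

end

theory Submission
  imports Defs "HOL-Library.Multiset"
begin

text \<open>By safety, every variable of the moved disequation is either an input variable of the
  head, which the mgu grounds whenever the clause is resolved with an atom satisfying the mode,
  or local to the disequation, hence fresh and private in the resolvent. A private disequation
  is never instantiated by later steps: a derivation either refutes it, in which case it is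
  non-unifiable and may be selected at any time, or gets stuck on it for good.

  So a successful \<open>P1\<close>-derivation is copied step by step in \<open>P2\<close>, the disequation being
  selected early. Conversely, a \<open>P2\<close>-derivation is tracked by a \<open>P1\<close>-derivation whose goal
  agrees with the \<open>P2\<close>-goal up to non-unifiable disequations, or, once the early instance of
  the disequation is unifiable, agrees with the part of the \<open>P2\<close>-goal in front of it, which is
  all the \<open>P2\<close>-derivation can still reach. Every atom selected in \<open>P2\<close> is therefore selected
  in \<open>P1\<close> as well, which gives the mode property; safety only depends on the multiset of body
  atoms.\<close>

lemma tsubst_tsubst: "tsubst (tsubst t \<sigma>) \<tau> = tsubst t (\<lambda>x. tsubst (\<sigma> x) \<tau>)"
  by (induction t) auto

lemma tsubst_cong: "(\<And>x. x \<in> tvars t \<Longrightarrow> \<sigma> x = \<tau> x) \<Longrightarrow> tsubst t \<sigma> = tsubst t \<tau>"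
  by (induction t) auto

lemma tvars_tsubst: "tvars (tsubst t \<sigma>) = (\<Union>x\<in>tvars t. tvars (\<sigma> x))"
  by (induction t) auto

lemma tsubst_Var [simp]: "tsubst t Var = t"
  by (induction t) (auto simp: map_idI)

lemma finite_tvars [simp]: "finite (tvars t)"
  by (induction t) auto

lemma asubst_asubst: "asubst (asubst A \<sigma>) \<tau> = asubst A (\<lambda>x. tsubst (\<sigma> x) \<tau>)"
  by (cases A) (auto simp: tsubst_tsubst)

lemma asubst_cong: "(\<And>x. x \<in> avars A \<Longrightarrow> \<sigma> x = \<tau> x) \<Longrightarrow> asubst A \<sigma> = asubst A \<tau>"
  by (cases A) (auto intro!: tsubst_cong)

lemma avars_asubst: "avars (asubst A \<sigma>) = (\<Union>x\<in>avars A. tvars (\<sigma> x))"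
  by (cases A) (auto simp: tvars_tsubst)

lemma asubst_Var [simp]: "asubst A Var = A"
  by (cases A) auto

lemma finite_avars [simp]: "finite (avars A)"
  by (cases A) auto

lemma gvars_simps [simp]:
  "gvars [] = {}" "gvars (A # G) = avars A \<union> gvars G" "gvars (G @ G') = gvars G \<union> gvars G'"
  by (auto simp: gvars_def)

lemma gsubst_simps [simp]:
  "gsubst [] \<sigma> = []" "gsubst (A # G) \<sigma> = asubst A \<sigma> # gsubst G \<sigma>"
  "gsubst (G @ G') \<sigma> = gsubst G \<sigma> @ gsubst G' \<sigma>"
  by (auto simp: gsubst_def)

lemma gsubst_gsubst: "gsubst (gsubst G \<sigma>) \<tau> = gsubst G (\<lambda>x. tsubst (\<sigma> x) \<tau>)"
  by (induction G) (auto simp: asubst_asubst)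

lemma gsubst_cong: "(\<And>x. x \<in> gvars G \<Longrightarrow> \<sigma> x = \<tau> x) \<Longrightarrow> gsubst G \<sigma> = gsubst G \<tau>"
  by (induction G) (auto intro!: asubst_cong)

lemma gvars_gsubst: "gvars (gsubst G \<sigma>) = (\<Union>x\<in>gvars G. tvars (\<sigma> x))"
  by (induction G) (auto simp: avars_asubst)

lemma gsubst_Var [simp]: "gsubst G Var = G"
  by (induction G) auto

lemma finite_gvars [simp]: "finite (gvars G)"
  by (induction G) auto

lemma ground_tsubst: "ground t \<Longrightarrow> tsubst t \<sigma> = t"
  using tsubst_cong[of t \<sigma> Var] by (auto simp: ground_def)

lemma ground_tsubstD: "ground (tsubst t \<sigma>) \<Longrightarrow> x \<in> tvars t \<Longrightarrow> ground (\<sigma> x)"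
  by (auto simp: ground_def tvars_tsubst)

definition moves_within :: "'f subst \<Rightarrow> nat set \<Rightarrow> bool" where
  "moves_within \<theta> T \<longleftrightarrow> (\<forall>x. \<theta> x \<noteq> Var x \<longrightarrow> x \<in> T \<and> tvars (\<theta> x) \<subseteq> T)"

lemma moves_within_mono: "moves_within \<theta> T \<Longrightarrow> T \<subseteq> T' \<Longrightarrow> moves_within \<theta> T'"
  by (auto simp: moves_within_def)

lemma mgu_moves_within: "is_mgu \<theta> E \<Longrightarrow> moves_within \<theta> (eqvars E)"
  by (auto simp: is_mgu_def moves_within_def)

lemma moves_within_tvarsD:
  "moves_within \<theta> T \<Longrightarrow> z \<in> tvars (\<theta> y) \<Longrightarrow> z \<notin> T \<Longrightarrow> z = y"
  by (cases "\<theta> y = Var y") (auto simp: moves_within_def)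

lemma eqvars_atom_eqs: "atom_eqs A B = Some E \<Longrightarrow> eqvars E \<subseteq> avars A \<union> avars B"
  by (cases "(A, B)" rule: atom_eqs.cases)
    (auto simp: eqvars_def split: if_splits dest: set_zip_leftD set_zip_rightD)

lemma asubst_moves_within_disjoint:
  "moves_within \<theta> T \<Longrightarrow> avars D \<inter> T = {} \<Longrightarrow> asubst D \<theta> = D"
  using asubst_cong[of D \<theta> Var] by (auto simp: moves_within_def)

lemma gvars_gsubst_moves_within:
  assumes "moves_within \<theta> T"
  shows "gvars (gsubst G \<theta>) \<subseteq> gvars G \<union> T"
proof
  fix z assume "z \<in> gvars (gsubst G \<theta>)"
  then obtain y where "y \<in> gvars G" "z \<in> tvars (\<theta> y)"
    by (auto simp: gvars_gsubst)
  then show "z \<in> gvars G \<union> T"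
    using assms by (cases "\<theta> y = Var y") (auto simp: moves_within_def)
qed

lemma disjoint_gvars_gsubst_moves_within:
  "moves_within \<theta> T \<Longrightarrow> avars D \<inter> T = {} \<Longrightarrow> avars D \<inter> gvars G = {}
   \<Longrightarrow> avars D \<inter> gvars (gsubst G \<theta>) = {}"
  using gvars_gsubst_moves_within by blast

lemma gvars_gsubst_inter_moves_within:
  assumes "moves_within \<theta> T" and "T \<subseteq> V" and "gvars G \<inter> V \<subseteq> gvars G'"
  shows "gvars (gsubst G \<theta>) \<inter> V \<subseteq> gvars (gsubst G' \<theta>)"
proof
  fix z assume "z \<in> gvars (gsubst G \<theta>) \<inter> V"
  then obtain y where y: "y \<in> gvars G" "z \<in> tvars (\<theta> y)" "z \<in> V"
    by (auto simp: gvars_gsubst)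
  have "y \<in> gvars G'"
    using y assms by (cases "\<theta> y = Var y") (auto simp: moves_within_def)
  then show "z \<in> gvars (gsubst G' \<theta>)"
    using y(2) by (auto simp: gvars_gsubst)
qed


fun nonunif_neq :: "('p, 'f) atom \<Rightarrow> bool" where
  "nonunif_neq (Neq s t) \<longleftrightarrow> \<not> (\<exists>\<tau>. tsubst s \<tau> = tsubst t \<tau>)"
| "nonunif_neq _ \<longleftrightarrow> False"

fun is_neq :: "('p, 'f) atom \<Rightarrow> bool" where
  "is_neq (Neq s t) \<longleftrightarrow> True"
| "is_neq _ \<longleftrightarrow> False"

lemma nonunif_neq_asubst: "nonunif_neq D \<Longrightarrow> nonunif_neq (asubst D \<theta>)"
  by (cases D) (auto simp: tsubst_tsubst)

lemma nonunif_neq_is_neq: "nonunif_neq D \<Longrightarrow> is_neq D"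
  by (cases D) auto

lemma no_step_Nil: "\<not> step P [] G"
  by (auto elim: step.cases)

lemma step_neqD: "step P (D # G) G' \<Longrightarrow> is_neq D \<Longrightarrow> G' = G \<and> nonunif_neq D"
  by (cases D) (auto elim: step.cases)

lemma step_nonunif_neq: "nonunif_neq D \<Longrightarrow> step P (D # G) G"
  by (cases D) (auto intro: step.neq)

lemma steps_refl [simp]: "steps P G G"
  by (simp add: steps_def)

lemma step_imp_steps: "step P G G' \<Longrightarrow> steps P G G'"
  by (simp add: steps_def)

lemma steps_trans: "steps P G G' \<Longrightarrow> steps P G' G'' \<Longrightarrow> steps P G G''"
  by (simp add: steps_def)

lemma steps_nonunif_neqs: "\<forall>D\<in>set Ds. nonunif_neq D \<Longrightarrow> steps P (Ds @ G) G"
  by (induction Ds) (auto intro: steps_trans[OF step_imp_steps[OF step_nonunif_neq]])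

lemma step_Cons_shape:
  assumes "step P (a # W) W'"
  obtains \<theta> B S where "W' = gsubst B \<theta> @ gsubst W \<theta>" and "S \<inter> gvars (a # W) = {}"
    and "gvars B \<subseteq> S" and "moves_within \<theta> (avars a \<union> S)"
  using assms
proof cases
  case (eq \<theta> s t)
  then show thesis
    using that[of "[]" \<theta> "{}"] mgu_moves_within[of \<theta> "[(s, t)]"] by (simp add: eqvars_def)
next
  case neq
  then show thesis
    using that[of "[]" Var "{}"] by (simp add: moves_within_def)
next
  case (res C \<rho> C' E \<theta>)
  have "eqvars E \<subseteq> avars a \<union> cvars C'"
    using eqvars_atom_eqs[OF res(7)] by (auto simp: cvars_def)
  then have "moves_within \<theta> (avars a \<union> cvars C')"
    using mgu_moves_within[OF res(8)] by (rule moves_within_mono[rotated])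
  then show thesis
    using that[of "bd C'" \<theta> "cvars C'"] res by (auto simp: cvars_def)
qed

text \<open>A disequation whose variables occur nowhere else in the goal is never instantiated,
  so a refutation can only get past it if it is non-unifiable.\<close>

lemma private_neq_nonunif:
  assumes "steps P (X @ D # Y) []" and "is_neq D" and "avars D \<inter> gvars (X @ Y) = {}"
  shows "nonunif_neq D"
proof -
  have "G = X @ D # Y \<Longrightarrow> avars D \<inter> gvars (X @ Y) = {} \<Longrightarrow> nonunif_neq D"
    if "(step P)\<^sup>*\<^sup>* G []" for G
    using that
  proof (induction arbitrary: X Y rule: converse_rtranclp_induct)
    case (step G G')
    show ?case
    proof (cases X)
      case Nil
      then show ?thesis using step step_neqD assms(2) by fastforce
    next
      case (Cons a X')
      then have "step P (a # X' @ D # Y) G'" using step by simp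
      then obtain \<theta> B S where G': "G' = gsubst B \<theta> @ gsubst (X' @ D # Y) \<theta>"
        and S: "S \<inter> gvars (a # X' @ D # Y) = {}" and B: "gvars B \<subseteq> S"
        and \<theta>: "moves_within \<theta> (avars a \<union> S)"
        by (rule step_Cons_shape)
      have D: "avars D \<inter> (avars a \<union> S) = {}" using S step.prems(2) Cons by auto
      have "G' = (gsubst B \<theta> @ gsubst X' \<theta>) @ D # gsubst Y \<theta>"
        using G' asubst_moves_within_disjoint[OF \<theta> D] by simp
      moreover have "avars D \<inter> gvars ((gsubst B \<theta> @ gsubst X' \<theta>) @ gsubst Y \<theta>) = {}"
        using disjoint_gvars_gsubst_moves_within[OF \<theta> D, of "B @ X' @ Y"] B D step.prems(2) Cons
        by auto
      ultimately show ?thesis by (rule step.IH)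
    qed
  qed simp
  then show ?thesis using assms(1,3) by (simp add: steps_def)
qed

text \<open>A derivation uses only finitely many variables; bounding them by \<open>V\<close> allows clauses to
  be renamed apart from all of them at once.\<close>

inductive step_within :: "('p, 'f) clause set \<Rightarrow> nat set \<Rightarrow> ('p, 'f) goal \<Rightarrow> ('p, 'f) goal \<Rightarrow> bool"
  for P V where
  eq: "\<lbrakk> is_mgu \<theta> [(t1, t2)]; gvars (Eq t1 t2 # G) \<subseteq> V \<rbrakk>
       \<Longrightarrow> step_within P V (Eq t1 t2 # G) (gsubst G \<theta>)"
| neq: "\<lbrakk> \<not> (\<exists>\<tau>. tsubst t1 \<tau> = tsubst t2 \<tau>); gvars (Neq t1 t2 # G) \<subseteq> V \<rbrakk>
       \<Longrightarrow> step_within P V (Neq t1 t2 # G) G"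
| res: "\<lbrakk> nonbasic A; C \<in> P; inj \<rho>; C' = rename_clause \<rho> C;
          cvars C' \<inter> gvars (A # G) = {};
          atom_eqs A (hd_atom C') = Some E; is_mgu \<theta> E; gvars (A # G) \<subseteq> V; cvars C' \<subseteq> V \<rbrakk>
        \<Longrightarrow> step_within P V (A # G) (gsubst (bd C' @ G) \<theta>)"

lemma step_within_imp_step: "step_within P V G G' \<Longrightarrow> step P G G'"
  by (induction rule: step_within.induct) (blast intro: step.intros)+

lemma step_within_mono: "step_within P V G G' \<Longrightarrow> V \<subseteq> V' \<Longrightarrow> step_within P V' G G'"
  by (induction rule: step_within.induct) (blast intro: step_within.intros)+

lemma finite_cvars: "finite (cvars C)"
  by (simp add: cvars_def)

lemma step_imp_step_within: "step P G G' \<Longrightarrow> \<exists>V. finite V \<and> step_within P V G G'"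
proof (induction rule: step.induct)
  case (eq \<theta> t1 t2 G)
  then show ?case by (intro exI[of _ "gvars (Eq t1 t2 # G)"]) (auto intro: step_within.eq)
next
  case (neq t1 t2 G)
  then show ?case by (intro exI[of _ "gvars (Neq t1 t2 # G)"]) (auto intro: step_within.neq)
next
  case (res A C \<rho> C' G E \<theta>)
  then have "step_within P (gvars (A # G) \<union> cvars C') (A # G) (gsubst (bd C' @ G) \<theta>)"
    by (intro step_within.res) auto
  then show ?case using finite_cvars by (intro exI[of _ "gvars (A # G) \<union> cvars C'"]) simp
qed

lemma steps_imp_steps_within: "steps P G G' \<Longrightarrow> \<exists>V. finite V \<and> (step_within P V)\<^sup>*\<^sup>* G G'"
  unfolding steps_def
proof (induction rule: rtranclp_induct)
  case (step G' G'')
  then obtain V V' where "finite V" "(step_within P V)\<^sup>*\<^sup>* G G'"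
    and "finite V'" "step_within P V' G' G''"
    using step_imp_step_within by blast
  moreover have "step_within P V \<le> step_within P (V \<union> V')"
    and "step_within P V' \<le> step_within P (V \<union> V')"
    by (auto intro: step_within_mono)
  ultimately have "(step_within P (V \<union> V'))\<^sup>*\<^sup>* G G''"
    by (meson rtranclp.rtrancl_into_rtrancl rtranclp_mono predicate2D)
  then show ?case using \<open>finite V\<close> \<open>finite V'\<close> by (intro exI[of _ "V \<union> V'"]) simp
qed (intro exI[of _ "{}"], simp)


section \<open>Goals equal up to non-unifiable disequations\<close>

text \<open>\<open>Y\<close> arises from \<open>X\<close> by deleting and inserting non-unifiable disequations; \<open>Q\<close> and \<open>R\<close>
  are side conditions on their variables, \<open>R\<close> relative to the rest of \<open>X\<close>.\<close>

inductive nonunif_sim :: "(('p, 'f) atom \<Rightarrow> bool) \<Rightarrow> (('p, 'f) atom \<Rightarrow> ('p, 'f) goal \<Rightarrow> bool)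
    \<Rightarrow> ('p, 'f) goal \<Rightarrow> ('p, 'f) goal \<Rightarrow> bool"
  for Q R where
  Nil: "nonunif_sim Q R [] []"
| Cons: "nonunif_sim Q R X Y \<Longrightarrow> nonunif_sim Q R (A # X) (A # Y)"
| del: "nonunif_sim Q R X Y \<Longrightarrow> nonunif_neq D \<Longrightarrow> Q D \<Longrightarrow> nonunif_sim Q R (D # X) Y"
| ins: "nonunif_sim Q R X Y \<Longrightarrow> nonunif_neq D \<Longrightarrow> R D X \<Longrightarrow> nonunif_sim Q R X (D # Y)"

lemma nonunif_sim_refl: "nonunif_sim Q R X X"
  by (induction X) (auto intro: nonunif_sim.intros)

lemma nonunif_sim_append_left: "nonunif_sim Q R X Y \<Longrightarrow> nonunif_sim Q R (Z @ X) (Z @ Y)"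
  by (induction Z) (auto intro: nonunif_sim.Cons)

lemma nonunif_sim_append:
  "nonunif_sim Q R X Y \<Longrightarrow> nonunif_sim Q R X' Y' \<Longrightarrow> (\<And>D Z Z'. R D Z \<Longrightarrow> R D (Z @ Z'))
   \<Longrightarrow> nonunif_sim Q R (X @ X') (Y @ Y')"
  by (induction rule: nonunif_sim.induct) (auto intro: nonunif_sim.intros)

lemma nonunif_sim_gsubst:
  "nonunif_sim Q R X Y \<Longrightarrow> (\<And>D. Q D \<Longrightarrow> Q (asubst D \<theta>))
   \<Longrightarrow> (\<And>D Z. R D Z \<Longrightarrow> R (asubst D \<theta>) (gsubst Z \<theta>))
   \<Longrightarrow> nonunif_sim Q R (gsubst X \<theta>) (gsubst Y \<theta>)"
  by (induction rule: nonunif_sim.induct) (auto intro: nonunif_sim.intros nonunif_neq_asubst)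

lemma nonunif_sim_Cons_leftE:
  assumes "nonunif_sim Q R (A # X) Y"
  obtains (kept) Ds Y' where "Y = Ds @ A # Y'" "\<forall>D\<in>set Ds. nonunif_neq D" "nonunif_sim Q R X Y'"
  | (deleted) Ds Y' where "Y = Ds @ Y'" "\<forall>D\<in>set Ds. nonunif_neq D" "nonunif_neq A" "Q A"
    "nonunif_sim Q R X Y'"
  using assms
proof (induction "A # X" Y arbitrary: thesis rule: nonunif_sim.induct)
  case (Cons Y)
  then show ?case using Cons.prems(1)[of "[]" Y] by simp
next
  case (del Y)
  then show ?case using del.prems(2)[of "[]" Y] by simp
next
  case (ins Y D)
  show ?case
  proof (rule ins.hyps(2))
    fix Ds Y' assume "Y = Ds @ A # Y'" "\<forall>D\<in>set Ds. nonunif_neq D" "nonunif_sim Q R X Y'"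
    then show thesis using ins.prems(1)[of "D # Ds" Y'] ins.hyps(3) by simp
  next
    fix Ds Y' assume "Y = Ds @ Y'" "\<forall>D\<in>set Ds. nonunif_neq D" "nonunif_neq A" "Q A"
      "nonunif_sim Q R X Y'"
    then show thesis using ins.prems(2)[of "D # Ds" Y'] ins.hyps(3) by simp
  qed
qed

lemma nonunif_sim_Cons_rightE:
  assumes "nonunif_sim Q R X (A # Y)"
  obtains (kept) Ds X' where "X = Ds @ A # X'" "\<forall>D\<in>set Ds. nonunif_neq D \<and> Q D"
    "nonunif_sim Q R X' Y"
  | (inserted) "nonunif_neq A" "nonunif_sim Q R X Y"
  using assms
proof (induction X "A # Y" arbitrary: thesis rule: nonunif_sim.induct)
  case (Cons X)
  then show ?case using Cons.prems(1)[of "[]" X] by simp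
next
  case (del X D)
  show ?case
  proof (rule del.hyps(2))
    fix Ds X' assume "X = Ds @ A # X'" "\<forall>D\<in>set Ds. nonunif_neq D \<and> Q D" "nonunif_sim Q R X' Y"
    then show thesis using del.prems(1)[of "D # Ds" X'] del.hyps(3,4) by simp
  next
    assume "nonunif_neq A" and "nonunif_sim Q R X Y"
    then have "nonunif_sim Q R (D # X) Y" using del.hyps(3,4) by (intro nonunif_sim.del)
    with \<open>nonunif_neq A\<close> show thesis by (rule del.prems(2))
  qed
next
  case (ins X)
  then show ?case by simp
qed

lemma nonunif_sim_Nil_leftD: "nonunif_sim Q R X Y \<Longrightarrow> X = [] \<Longrightarrow> \<forall>D\<in>set Y. nonunif_neq D"
  by (induction rule: nonunif_sim.induct) auto

lemma nonunif_sim_Nil_rightD: "nonunif_sim Q R X Y \<Longrightarrow> Y = [] \<Longrightarrow> \<forall>D\<in>set X. nonunif_neq D"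
  by (induction rule: nonunif_sim.induct) auto

lemma nonunif_sim_gvars_inter:
  "nonunif_sim (\<lambda>D. avars D \<inter> V = {}) R X Y \<Longrightarrow> gvars X \<inter> V \<subseteq> gvars Y"
  by (induction rule: nonunif_sim.induct) auto

lemma nonunif_sim_gvars_subset:
  "nonunif_sim Q (\<lambda>D Z. avars D \<subseteq> gvars Z) X Y \<Longrightarrow> gvars Y \<subseteq> gvars X"
  by (induction rule: nonunif_sim.induct) auto

abbreviation hoisted :: "('p, 'f) goal \<Rightarrow> ('p, 'f) goal \<Rightarrow> bool" where
  "hoisted \<equiv> nonunif_sim (\<lambda>_. True) (\<lambda>D Z. avars D \<subseteq> gvars Z)"

abbreviation hoisted_apart :: "nat set \<Rightarrow> ('p, 'f) goal \<Rightarrow> ('p, 'f) goal \<Rightarrow> bool" where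
  "hoisted_apart V \<equiv> nonunif_sim (\<lambda>D. avars D \<inter> V = {}) (\<lambda>_ _. True)"

lemma hoisted_gsubst: "hoisted X Y \<Longrightarrow> hoisted (gsubst X \<theta>) (gsubst Y \<theta>)"
  by (rule nonunif_sim_gsubst) (auto simp: avars_asubst gvars_gsubst)

lemma hd_atom_rename_clause: "hd_atom (rename_clause \<rho> C) = asubst (hd_atom C) (\<lambda>x. Var (\<rho> x))"
  by (simp add: hd_atom_def rename_clause_def rename_term_def)

lemma bd_rename_clause: "bd (rename_clause \<rho> C) = gsubst (bd C) (\<lambda>x. Var (\<rho> x))"
  by (simp add: bd_def rename_clause_def)

lemma cvars_rename_clause: "cvars (rename_clause \<rho> C) = \<rho> ` cvars C"
  by (auto simp: cvars_def hd_atom_rename_clause bd_rename_clause avars_asubst gvars_gsubst)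

lemma inj_extend_fresh:
  fixes \<rho> :: "nat \<Rightarrow> nat"
  assumes "inj \<rho>" and "finite K" and "finite X"
  obtains \<rho>' where "inj \<rho>'" and "\<forall>x\<in>K. \<rho>' x = \<rho> x" and "\<forall>x. x \<notin> K \<longrightarrow> \<rho>' x \<notin> X"
proof -
  have "infinite (UNIV - (\<rho> ` K \<union> X))"
    using assms(2,3) by (intro Diff_infinite_finite) auto
  then obtain e :: "nat \<Rightarrow> nat" where e: "inj e" "range e \<subseteq> UNIV - (\<rho> ` K \<union> X)"
    using infinite_countable_subset by blast
  let ?\<rho>' = "\<lambda>x. if x \<in> K then \<rho> x else e x"
  have "inj ?\<rho>'"
  proof (rule injI)
    fix x y assume "?\<rho>' x = ?\<rho>' y"
    moreover have "\<rho> w \<noteq> e z" and "e z \<noteq> \<rho> w" if "w \<in> K" for z w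
      using e(2) that by blast+
    ultimately show "x = y"
      using assms(1) e(1) by (cases "x \<in> K"; cases "y \<in> K") (simp_all add: inj_eq)
  qed
  moreover have "\<forall>x. x \<notin> K \<longrightarrow> ?\<rho>' x \<notin> X" using e(2) by auto
  ultimately show thesis using that by simp
qed

lemma mgu_grounds_input_vars:
  assumes mode: "mode_for_program M P" and C: "C \<in> P" and sat: "atom_sat a M"
    and eqs: "atom_eqs a (hd_atom (rename_clause \<rho> C)) = Some E" and mgu: "is_mgu \<theta> E"
    and x: "x \<in> input_vars M (hd_atom C)"
  shows "ground (\<theta> (\<rho> x))"
proof -
  obtain p ts where hd: "hd_atom C = Pred p ts" by (simp add: hd_atom_def)
  from x obtain i ms where i: "i < length ts" "(p, ms) \<in> M" "length ms = length ts" "ms ! i"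
    and x_i: "x \<in> tvars (ts ! i)"
    by (auto simp: hd)
  from eqs obtain ss where a: "a = Pred p ss" "length ss = length ts"
    and E: "E = zip ss (map (\<lambda>t. tsubst t (\<lambda>x. Var (\<rho> x))) ts)"
    by (cases a) (auto simp: hd hd_atom_rename_clause rename_term_def split: if_splits)
  from sat obtain ms' where ms': "(p, ms') \<in> M" "length ms' = length ss"
    "\<forall>i<length ss. ms' ! i \<longrightarrow> ground (ss ! i)"
    by (auto simp: a)
  have "(p, length ts) \<in> preds_prog P"
    using C by (force simp: preds_prog_def preds_goal_def hd)
  then have "ms' = ms"
    using mode ms' i a(2) by (auto simp: mode_for_program_def)
  then have "ground (ss ! i)" using ms' i a(2) by auto
  moreover have "(ss ! i, tsubst (ts ! i) (\<lambda>x. Var (\<rho> x))) \<in> set E"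
    using i a(2) by (auto simp: E in_set_zip intro!: exI[of _ i])
  then have "tsubst (ss ! i) \<theta> = tsubst (ts ! i) (\<lambda>x. \<theta> (\<rho> x))"
    using mgu by (auto simp: is_mgu_def unifies_def tsubst_tsubst)
  ultimately show ?thesis
    using x_i by (metis ground_tsubst ground_tsubstD)
qed

lemma set_take_drop_Suc:
  assumes "i < length xs"
  shows "set (take i xs @ drop (Suc i) xs) = {xs ! j | j. j < length xs \<and> j \<noteq> i}"
proof (intro equalityI subsetI)
  fix A assume "A \<in> {xs ! j | j. j < length xs \<and> j \<noteq> i}"
  then obtain j where j: "j < length xs" "j \<noteq> i" "A = xs ! j" by blast
  show "A \<in> set (take i xs @ drop (Suc i) xs)"
  proof (cases "j < i")
    case True
    then show ?thesis using j by (auto simp: in_set_conv_nth intro!: exI[of _ j])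
  next
    case False
    then show ?thesis using j by (auto simp: in_set_conv_nth intro!: exI[of _ "j - Suc i"])
  qed
qed (auto simp: in_set_conv_nth)

lemma all_other_nth_iff:
  assumes "i < length xs"
  shows "(\<forall>j<length xs. j \<noteq> i \<longrightarrow> P (xs ! j)) \<longleftrightarrow> (\<forall>A \<in># mset xs - {#xs ! i#}. P A)"
proof -
  have "mset xs - {#xs ! i#} = mset (take i xs @ drop (Suc i) xs)"
    by (subst (1) id_take_nth_drop[OF assms]) auto
  then show ?thesis using set_take_drop_Suc[OF assms] by auto
qed

lemma clause_safe_mset_bd:
  assumes safe: "clause_safe C M" and hd: "hd_atom C' = hd_atom C"
    and bd: "mset (bd C') = mset (bd C)"
  shows "clause_safe C' M"
  unfolding clause_safe_def
proof (intro allI impI ballI)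
  fix i s t x
  assume i: "i < length (bd C')" and D: "bd C' ! i = Neq s t" and x: "x \<in> tvars s \<union> tvars t"
  have "Neq s t \<in> set (bd C)" using bd i D by (metis nth_mem set_mset_mset)
  then obtain j where j: "j < length (bd C)" "bd C ! j = Neq s t" by (auto simp: in_set_conv_nth)
  have others: "mset (bd C') - {#bd C' ! i#} = mset (bd C) - {#bd C ! j#}"
    using bd D j(2) by simp
  from safe j x have "x \<in> input_vars M (hd_atom C) \<or> local_var x j C"
    unfolding clause_safe_def by blast
  moreover have "(\<forall>k<length (bd C'). k \<noteq> i \<longrightarrow> x \<notin> avars (bd C' ! k))
      \<longleftrightarrow> (\<forall>k<length (bd C). k \<noteq> j \<longrightarrow> x \<notin> avars (bd C ! k))"
    using all_other_nth_iff[OF i, of "\<lambda>A. x \<notin> avars A"]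
      all_other_nth_iff[OF j(1), of "\<lambda>A. x \<notin> avars A"] others
    by simp
  then have "local_var x i C' \<longleftrightarrow> local_var x j C"
    using hd i j D by (simp add: local_var_def)
  ultimately show "x \<in> input_vars M (hd_atom C') \<or> local_var x i C'"
    using hd by auto
qed

section \<open>Tracking a derivation up to a blocking disequation\<close>

definition blocking_neq :: "('p, 'f) atom \<Rightarrow> ('p, 'f) goal \<Rightarrow> bool" where
  "blocking_neq D Z \<longleftrightarrow> is_neq D \<and> \<not> nonunif_neq D \<and> avars D \<inter> gvars Z = {}"

definition blocked_tail :: "('p, 'f) goal \<Rightarrow> ('p, 'f) goal \<Rightarrow> ('p, 'f) goal \<Rightarrow> bool" where
  "blocked_tail Z Y1 Y2 \<longleftrightarrow>
     Y1 = [] \<and> Y2 = [] \<or> (\<exists>D Y2'. Y2 = D # Y2' \<and> blocking_neq D (Z @ Y2'))"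

text \<open>\<open>tracks V X Y\<close> relates a \<open>P1\<close>-goal \<open>X\<close> to a \<open>P2\<close>-goal \<open>Y\<close> whose derivation stays within
  the variables \<open>V\<close>. Either the goals agree up to non-unifiable disequations, or \<open>Y\<close> is blocked:
  it agrees with a prefix of \<open>X\<close> up to a private unifiable disequation, which no later step
  instantiates or removes, so only the atoms in front of it matter.\<close>

definition tracks :: "nat set \<Rightarrow> ('p, 'f) goal \<Rightarrow> ('p, 'f) goal \<Rightarrow> bool" where
  "tracks V X Y \<longleftrightarrow> (\<exists>X1 X2 Y1 Y2. X = X1 @ Y1 \<and> Y = X2 @ Y2
     \<and> hoisted_apart V X1 X2 \<and> gvars Y1 \<inter> V \<subseteq> gvars Y2 \<and> blocked_tail X2 Y1 Y2)"

lemma tracksI: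
  "hoisted_apart V X1 X2 \<Longrightarrow> gvars Y1 \<inter> V \<subseteq> gvars Y2 \<Longrightarrow> blocked_tail X2 Y1 Y2
   \<Longrightarrow> tracks V (X1 @ Y1) (X2 @ Y2)"
  unfolding tracks_def by blast

lemma tracks_refl: "tracks V X X"
  using tracksI[of V X X "[]" "[]"] by (simp add: nonunif_sim_refl blocked_tail_def)

lemma tracks_Nil_rightD: "tracks V X [] \<Longrightarrow> \<forall>D\<in>set X. nonunif_neq D"
  unfolding tracks_def blocked_tail_def using nonunif_sim_Nil_rightD by fastforce

lemma tracks_Cons_nonbasicD:
  assumes "tracks V X (A # Y)" and "nonbasic A"
  obtains X' where "steps P X (A # X')"
proof -
  from assms(1) obtain X1 X2 Y1 Y2 where X: "X = X1 @ Y1" and Y: "A # Y = X2 @ Y2"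
    and hoisted: "hoisted_apart V X1 X2" and tail: "blocked_tail X2 Y1 Y2"
    unfolding tracks_def by blast
  have "\<not> is_neq A" "\<not> nonunif_neq A" using assms(2) by (cases A; simp)+
  then obtain X2' where "X2 = A # X2'"
    using Y tail by (cases X2) (auto simp: blocked_tail_def blocking_neq_def)
  with hoisted obtain Ds X1' where "X1 = Ds @ A # X1'" and "\<forall>D\<in>set Ds. nonunif_neq D"
    using \<open>\<not> nonunif_neq A\<close> by (auto elim: nonunif_sim_Cons_rightE)
  then show thesis
    using X steps_nonunif_neqs[of Ds P "A # X1' @ Y1"] by (intro that) simp
qed

lemma blocked_tail_Cons: "blocked_tail (A # Z) Y1 Y2 \<Longrightarrow> blocked_tail Z Y1 Y2"
  by (auto simp: blocked_tail_def blocking_neq_def)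

lemma blocked_tail_gsubst:
  assumes tail: "blocked_tail (a # X2) Y1 Y2" and \<theta>: "moves_within \<theta> (avars a \<union> S)"
    and S: "S \<inter> gvars (a # X2 @ Y2) = {}" and B2: "gvars B2 \<subseteq> avars a \<union> S"
  shows "blocked_tail (B2 @ gsubst X2 \<theta>) (gsubst Y1 \<theta>) (gsubst Y2 \<theta>)"
proof (cases "Y1 = [] \<and> Y2 = []")
  case False
  then obtain D Y2' where Y2: "Y2 = D # Y2'" and D: "blocking_neq D (a # X2 @ Y2')"
    using tail by (auto simp: blocked_tail_def)
  then have D_T: "avars D \<inter> (avars a \<union> S) = {}"
    using S by (auto simp: blocking_neq_def)
  then have "gsubst Y2 \<theta> = D # gsubst Y2' \<theta>"
    using Y2 asubst_moves_within_disjoint[OF \<theta>] by simp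
  moreover have "blocking_neq D (B2 @ gsubst X2 \<theta> @ gsubst Y2' \<theta>)"
    using D D_T B2 disjoint_gvars_gsubst_moves_within[OF \<theta> D_T]
    by (auto simp: blocking_neq_def)
  ultimately show ?thesis unfolding blocked_tail_def append_assoc by blast
qed (simp add: blocked_tail_def)

text \<open>\<open>B1\<close> and \<open>B2\<close> are the instantiated bodies of corresponding resolution steps, \<open>Z\<close> the
  instantiated rest of the \<open>P2\<close>-goal; \<open>D1\<close> and \<open>D2\<close> are the two instances of the disequation.\<close>

definition bodies_track :: "nat set \<Rightarrow> ('p, 'f) goal \<Rightarrow> ('p, 'f) goal \<Rightarrow> ('p, 'f) goal \<Rightarrow> bool" where
  "bodies_track V Z B1 B2 \<longleftrightarrow> hoisted_apart V B1 B2
     \<or> (\<exists>g1 g2 g3 D1 D2. B1 = g1 @ g2 @ D1 # g3 \<and> B2 = g1 @ D2 # g2 @ g3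
          \<and> avars D1 \<inter> V = {} \<and> blocking_neq D2 (g1 @ g2 @ g3 @ Z))"

lemma bodies_track_refl: "bodies_track V Z B B"
  by (simp add: bodies_track_def nonunif_sim_refl)

lemma tracks_resolvent:
  assumes hoisted: "hoisted_apart V X1 X2" and tail_vars: "gvars Y1 \<inter> V \<subseteq> gvars Y2"
    and tail: "blocked_tail (a # X2) Y1 Y2"
    and \<theta>: "moves_within \<theta> (avars a \<union> S)" and S_V: "avars a \<union> S \<subseteq> V"
    and S: "S \<inter> gvars (a # X2 @ Y2) = {}" and B2: "gvars B2 \<subseteq> avars a \<union> S"
    and bodies: "bodies_track V (gsubst (X2 @ Y2) \<theta>) B1 B2"
  shows "tracks V (B1 @ gsubst (X1 @ Y1) \<theta>) (B2 @ gsubst (X2 @ Y2) \<theta>)"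
proof -
  have fixed: "asubst D \<theta> = D" if "avars D \<inter> V = {}" for D
    using that S_V by (intro asubst_moves_within_disjoint[OF \<theta>]) blast
  have hoisted': "hoisted_apart V (gsubst X1 \<theta>) (gsubst X2 \<theta>)"
    using hoisted by (rule nonunif_sim_gsubst) (simp_all add: fixed)
  have tail_vars': "gvars (gsubst Y1 \<theta>) \<inter> V \<subseteq> gvars (gsubst Y2 \<theta>)"
    using gvars_gsubst_inter_moves_within[OF \<theta> S_V tail_vars] .
  from bodies show ?thesis
    unfolding bodies_track_def
  proof (elim disjE exE conjE)
    assume "hoisted_apart V B1 B2"
    then have "hoisted_apart V (B1 @ gsubst X1 \<theta>) (B2 @ gsubst X2 \<theta>)"
      using hoisted' by (rule nonunif_sim_append) simp
    from tracksI[OF this tail_vars' blocked_tail_gsubst[OF tail \<theta> S B2]] show ?thesis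
      by simp
  next
    fix g1 g2 g3 D1 D2
    assume B: "B1 = g1 @ g2 @ D1 # g3" "B2 = g1 @ D2 # g2 @ g3" and D1: "avars D1 \<inter> V = {}"
      and D2: "blocking_neq D2 (g1 @ g2 @ g3 @ gsubst (X2 @ Y2) \<theta>)"
    have "gvars (gsubst X1 \<theta>) \<inter> V \<subseteq> gvars (gsubst X2 \<theta>)"
      using hoisted' by (rule nonunif_sim_gvars_inter)
    then have "gvars (g2 @ D1 # g3 @ gsubst (X1 @ Y1) \<theta>) \<inter> V
        \<subseteq> gvars (D2 # g2 @ g3 @ gsubst (X2 @ Y2) \<theta>)"
      using tail_vars' D1 by auto
    moreover have "blocked_tail g1 (g2 @ D1 # g3 @ gsubst (X1 @ Y1) \<theta>)
        (D2 # g2 @ g3 @ gsubst (X2 @ Y2) \<theta>)"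
      using D2 by (simp add: blocked_tail_def)
    ultimately have "tracks V (g1 @ g2 @ D1 # g3 @ gsubst (X1 @ Y1) \<theta>)
        (g1 @ D2 # g2 @ g3 @ gsubst (X2 @ Y2) \<theta>)"
      by (rule tracksI[OF nonunif_sim_refl])
    then show ?thesis using B by simp
  qed
qed

section \<open>Moving the disequation to the left\<close>

locale neq_shift =
  fixes P1 P2 :: "('p, 'f) clause set" and M :: "'p mode"
    and H :: "'p \<times> 'f term list" and G1 G2 G3 :: "('p, 'f) goal"
    and t1 t2 :: "'f term"
  assumes mode: "mode_for_program M P1"
    and safe: "prog_safe P1 M"
    and sat: "prog_sat P1 M"
    and C1_mem: "(H, G1 @ G2 @ [Neq t1 t2] @ G3) \<in> P1"
    and P2_eq: "P2 = (P1 - {(H, G1 @ G2 @ [Neq t1 t2] @ G3)}) \<union> {(H, G1 @ [Neq t1 t2] @ G2 @ G3)}"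
begin

abbreviation diseq :: "('p, 'f) atom" where "diseq \<equiv> Neq t1 t2"

definition C1 :: "('p, 'f) clause" where "C1 = (H, G1 @ G2 @ [diseq] @ G3)"
definition C2 :: "('p, 'f) clause" where "C2 = (H, G1 @ [diseq] @ G2 @ G3)"

text \<open>By safety, the variables of the disequation that are not input variables of the head
  occur nowhere else in the clause.\<close>

definition locals :: "nat set" where
  "locals = avars diseq - input_vars M (hd_atom C1)"

definition shared :: "nat set" where
  "shared = avars (hd_atom C1) \<union> gvars (G1 @ G2 @ G3)"

lemma C1_in_P1: "C1 \<in> P1"
  using C1_mem by (simp add: C1_def)

lemma C2_in_P2: "C2 \<in> P2"
  using P2_eq by (simp add: C2_def)

lemma P2_cases: "C \<in> P2 \<Longrightarrow> C = C2 \<or> C \<in> P1"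
  using P2_eq by (auto simp: C2_def)

lemma P1_cases: "C \<in> P1 \<Longrightarrow> C = C1 \<or> C \<in> P2"
  using P2_eq by (auto simp: C1_def)

lemma hd_atom_C2: "hd_atom C2 = hd_atom C1"
  by (simp add: hd_atom_def C1_def C2_def)

lemma bd_C1: "bd C1 = G1 @ G2 @ [diseq] @ G3"
  by (simp add: bd_def C1_def)

lemma bd_C2: "bd C2 = G1 @ [diseq] @ G2 @ G3"
  by (simp add: bd_def C2_def)

lemma cvars_C1: "cvars C1 = shared \<union> avars diseq"
  by (auto simp: cvars_def bd_C1 shared_def)

lemma cvars_C2: "cvars C2 = cvars C1"
  by (auto simp: cvars_def bd_C1 bd_C2 hd_atom_C2)

lemma hd_atom_rename_C1_cong:
  "\<forall>x\<in>shared. \<rho>' x = \<rho> x \<Longrightarrow> hd_atom (rename_clause \<rho>' C1) = hd_atom (rename_clause \<rho> C1)"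
  by (auto simp: hd_atom_rename_clause shared_def intro!: asubst_cong)

lemma resolvent_C1:
  "gsubst (bd (rename_clause \<rho> C1) @ W) \<theta> = gsubst G1 (\<lambda>x. \<theta> (\<rho> x)) @ gsubst G2 (\<lambda>x. \<theta> (\<rho> x))
     @ asubst diseq (\<lambda>x. \<theta> (\<rho> x)) # gsubst G3 (\<lambda>x. \<theta> (\<rho> x)) @ gsubst W \<theta>"
  by (simp add: bd_rename_clause bd_C1 gsubst_gsubst tsubst_tsubst)

lemma resolvent_C2:
  "gsubst (bd (rename_clause \<rho> C2) @ W) \<theta> = gsubst G1 (\<lambda>x. \<theta> (\<rho> x))
     @ asubst diseq (\<lambda>x. \<theta> (\<rho> x)) # gsubst G2 (\<lambda>x. \<theta> (\<rho> x)) @ gsubst G3 (\<lambda>x. \<theta> (\<rho> x))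
     @ gsubst W \<theta>"
  by (simp add: bd_rename_clause bd_C2 gsubst_gsubst tsubst_tsubst)

lemma locals_disjoint_shared: "locals \<inter> shared = {}"
proof -
  let ?i = "length (G1 @ G2)"
  have i: "?i < length (bd C1)" and D: "bd C1 ! ?i = diseq"
    by (simp_all add: bd_C1 nth_append)
  have others: "mset (bd C1) - {#bd C1 ! ?i#} = mset (G1 @ G2 @ G3)"
    by (simp add: D) (simp add: bd_C1)
  have "clause_safe C1 M"
    using safe C1_in_P1 by (simp add: prog_safe_def)
  then have "local_var x ?i C1" if "x \<in> locals" for x
    using that i D by (auto simp: clause_safe_def locals_def)
  then have "x \<notin> avars (hd_atom C1) \<and> (\<forall>A\<in>set (G1 @ G2 @ G3). x \<notin> avars A)"
    if "x \<in> locals" for x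
    using that all_other_nth_iff[OF i, of "\<lambda>A. x \<notin> avars A"] others
    by (auto simp: local_var_def)
  then show ?thesis by (auto simp: shared_def gvars_def)
qed

lemma not_local_input_var: "x \<in> avars diseq \<Longrightarrow> x \<notin> locals \<Longrightarrow> x \<in> shared"
  by (auto simp: locals_def shared_def hd_atom_def C1_def)

lemma P2_safe: "prog_safe P2 M"
  unfolding prog_safe_def
proof
  fix C assume "C \<in> P2"
  then consider "C = C2" | "C \<in> P1" using P2_cases by blast
  then show "clause_safe C M"
  proof cases
    case 1
    have "clause_safe C1 M" using safe C1_in_P1 by (simp add: prog_safe_def)
    moreover have "mset (bd C2) = mset (bd C1)" by (simp add: bd_C1 bd_C2)
    ultimately show ?thesis
      using 1 hd_atom_C2 clause_safe_mset_bd by blast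
  next
    case 2
    then show ?thesis using safe by (simp add: prog_safe_def)
  qed
qed

lemma reachable_atom_sat:
  "steps P1 [A0] (a # X) \<Longrightarrow> nonbasic A0 \<Longrightarrow> atom_sat A0 M \<Longrightarrow> nonbasic a \<Longrightarrow> atom_sat a M"
  using sat unfolding prog_sat_def by blast

context
  fixes a :: "('p, 'f) atom" and W \<rho> E \<theta>
  assumes inj: "inj \<rho>"
    and eqs: "atom_eqs a (hd_atom (rename_clause \<rho> C1)) = Some E" and mgu: "is_mgu \<theta> E"
    and fresh: "\<rho> ` cvars C1 \<inter> gvars (a # W) = {}"
begin

lemma renamed_local_notin_eqvars:
  assumes "x \<in> locals"
  shows "\<rho> x \<notin> eqvars E"
proof
  assume "\<rho> x \<in> eqvars E"
  then have "\<rho> x \<in> avars a \<or> x \<in> avars (hd_atom C1)"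
    using eqvars_atom_eqs[OF eqs] inj by (auto simp: hd_atom_rename_clause avars_asubst inj_eq)
  moreover have "x \<in> cvars C1" "x \<notin> shared"
    using assms locals_disjoint_shared by (auto simp: cvars_C1 locals_def)
  ultimately show False
    using fresh by (auto simp: shared_def)
qed

lemma resolved_local_unchanged: "x \<in> locals \<Longrightarrow> \<theta> (\<rho> x) = Var (\<rho> x)"
  using renamed_local_notin_eqvars mgu_moves_within[OF mgu] by (auto simp: moves_within_def)

lemma resolved_input_ground:
  "atom_sat a M \<Longrightarrow> x \<in> avars diseq \<Longrightarrow> x \<notin> locals \<Longrightarrow> ground (\<theta> (\<rho> x))"
  using mgu_grounds_input_vars[OF mode C1_in_P1 _ eqs mgu] by (auto simp: locals_def)

lemma resolved_neq_vars:
  assumes "atom_sat a M"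
  shows "avars (asubst diseq (\<lambda>x. \<theta> (\<rho> x))) \<subseteq> \<rho> ` locals"
proof
  fix z assume "z \<in> avars (asubst diseq (\<lambda>x. \<theta> (\<rho> x)))"
  then obtain x where "x \<in> avars diseq" "z \<in> tvars (\<theta> (\<rho> x))"
    unfolding avars_asubst by blast
  then show "z \<in> \<rho> ` locals"
    using resolved_local_unchanged resolved_input_ground[OF assms]
    by (cases "x \<in> locals") (auto simp: ground_def)
qed

lemma resolved_neq_private:
  assumes "atom_sat a M"
  shows "avars (asubst diseq (\<lambda>x. \<theta> (\<rho> x)))
      \<inter> gvars (gsubst (G1 @ G2 @ G3) (\<lambda>x. \<theta> (\<rho> x)) @ gsubst W \<theta>) = {}"
proof -
  have "\<rho> l \<notin> gvars (gsubst (G1 @ G2 @ G3) (\<lambda>x. \<theta> (\<rho> x)) @ gsubst W \<theta>)"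
    if l: "l \<in> locals" for l
  proof
    assume "\<rho> l \<in> gvars (gsubst (G1 @ G2 @ G3) (\<lambda>x. \<theta> (\<rho> x)) @ gsubst W \<theta>)"
    then consider y where "y \<in> gvars (G1 @ G2 @ G3)" "\<rho> l \<in> tvars (\<theta> (\<rho> y))"
      | y where "y \<in> gvars W" "\<rho> l \<in> tvars (\<theta> y)"
      by (auto simp: gvars_gsubst)
    then show False
    proof cases
      case 1
      then have "l = y"
        using moves_within_tvarsD[OF mgu_moves_within[OF mgu]] renamed_local_notin_eqvars[OF l] inj
        by (metis injD)
      then show False using 1(1) l locals_disjoint_shared by (auto simp: shared_def)
    next
      case 2
      then have "\<rho> l = y"
        using moves_within_tvarsD[OF mgu_moves_within[OF mgu]] renamed_local_notin_eqvars[OF l]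
        by blast
      moreover have "l \<in> cvars C1" using l by (auto simp: cvars_C1 locals_def)
      ultimately show False
        using 2(1) fresh by auto
    qed
  qed
  then show ?thesis using resolved_neq_vars[OF assms] by blast
qed

end

subsection \<open>Refutations in \<open>P1\<close> carry over to \<open>P2\<close>\<close>

text \<open>The \<open>P1\<close>-refutation shows that the private instance of the disequation is
  non-unifiable, so \<open>P2\<close> may select it early.\<close>

lemma C1_resolution_hoisted:
  assumes sat_a: "atom_sat a M" and inj: "inj \<rho>"
    and eqs: "atom_eqs a (hd_atom (rename_clause \<rho> C1)) = Some E" and mgu: "is_mgu \<theta> E"
    and fresh: "\<rho> ` cvars C1 \<inter> gvars (a # X) = {}"
    and refuted: "steps P1 (gsubst (bd (rename_clause \<rho> C1) @ X) \<theta>) []"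
    and hoisted: "hoisted X Y"
  shows "hoisted (gsubst (bd (rename_clause \<rho> C1) @ X) \<theta>) (gsubst (bd (rename_clause \<rho> C2) @ Y) \<theta>)"
proof -
  let ?D = "asubst diseq (\<lambda>x. \<theta> (\<rho> x))" and ?g = "\<lambda>G. gsubst G (\<lambda>x. \<theta> (\<rho> x))"
  have "avars ?D \<inter> gvars ((?g G1 @ ?g G2) @ ?g G3 @ gsubst X \<theta>) = {}"
    using resolved_neq_private[OF inj eqs mgu fresh sat_a] by simp
  moreover have "steps P1 ((?g G1 @ ?g G2) @ ?D # ?g G3 @ gsubst X \<theta>) []"
    using refuted resolvent_C1 by simp
  ultimately have nonunif: "nonunif_neq ?D"
    using private_neq_nonunif by fastforce
  have "hoisted (?D # ?g G3 @ gsubst X \<theta>) (?g G3 @ gsubst Y \<theta>)"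
    using nonunif_sim_append_left[OF hoisted_gsubst[OF hoisted]] nonunif
    by (rule nonunif_sim.del) simp
  then have "hoisted (?g G2 @ ?D # ?g G3 @ gsubst X \<theta>) (?g G2 @ ?g G3 @ gsubst Y \<theta>)"
    by (rule nonunif_sim_append_left)
  then have "hoisted (?g G2 @ ?D # ?g G3 @ gsubst X \<theta>) (?D # ?g G2 @ ?g G3 @ gsubst Y \<theta>)"
    by (rule nonunif_sim.ins[OF _ nonunif]) auto
  then show ?thesis
    unfolding resolvent_C1 resolvent_C2 by (rule nonunif_sim_append_left)
qed

lemma step_P1_simulated:
  assumes step: "step P1 (a # X) X'" and reach: "steps P1 [A0] (a # X)" "nonbasic A0" "atom_sat A0 M"
    and refuted: "steps P1 X' []" and hoisted: "hoisted X Y"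
  obtains Y' where "step P2 (a # Y) Y'" and "hoisted X' Y'"
proof -
  have vars: "gvars Y \<subseteq> gvars X"
    using hoisted by (rule nonunif_sim_gvars_subset)
  from step show thesis
  proof cases
    case (eq \<theta> s t)
    then have "step P2 (a # Y) (gsubst Y \<theta>)" by (auto intro: step.eq)
    with eq show thesis using hoisted_gsubst[OF hoisted] by (intro that) auto
  next
    case (neq s t)
    then have "step P2 (a # Y) Y" by (auto intro: step.neq)
    with neq show thesis using hoisted by (intro that) auto
  next
    case (res C \<rho> C' E \<theta>)
    have fresh: "\<rho> ` cvars C \<inter> gvars (a # X) = {}"
      using res by (simp add: cvars_rename_clause)
    show thesis
    proof (cases "C = C1")
      case False
      then have "C \<in> P2" using P1_cases res(3) by blast
      moreover have "cvars C' \<inter> gvars (a # Y) = {}" using res(6) vars by auto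
      ultimately have "step P2 (a # Y) (gsubst (bd C' @ Y) \<theta>)"
        using res by (intro step.res) auto
      then show thesis
        using that nonunif_sim_append_left[OF hoisted_gsubst[OF hoisted]] res(1) by simp
    next
      case True
      have eqs: "atom_eqs a (hd_atom (rename_clause \<rho> C1)) = Some E"
        using res True by simp
      have "cvars (rename_clause \<rho> C2) \<inter> gvars (a # Y) = {}"
        using fresh vars True by (auto simp: cvars_rename_clause cvars_C2)
      then have "step P2 (a # Y) (gsubst (bd (rename_clause \<rho> C2) @ Y) \<theta>)"
        using res eqs C2_in_P2 by (intro step.res) (auto simp: hd_atom_rename_clause hd_atom_C2)
      moreover have "atom_sat a M" using reachable_atom_sat[OF reach res(2)] .
      then have "hoisted X' (gsubst (bd (rename_clause \<rho> C2) @ Y) \<theta>)"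
        using C1_resolution_hoisted[OF _ res(4) eqs res(8) _ _ hoisted] fresh refuted res True
        by simp
      ultimately show thesis by (rule that)
    qed
  qed
qed

lemma refutation_P1_imp_P2:
  assumes "steps P1 X []" and "steps P1 [A0] X" "nonbasic A0" "atom_sat A0 M"
    and "hoisted X Y"
  shows "steps P2 Y []"
proof -
  from assms(1) have "(step P1)\<^sup>*\<^sup>* X []" by (simp add: steps_def)
  then show ?thesis using assms(2,5)
  proof (induction arbitrary: Y rule: converse_rtranclp_induct)
    case base
    then have "\<forall>D\<in>set Y. nonunif_neq D" using nonunif_sim_Nil_leftD by blast
    then show ?case using steps_nonunif_neqs[of Y P2 "[]"] by simp
  next
    case (step X X1)
    obtain a Xr where X: "X = a # Xr" using step.hyps(1) no_step_Nil by (cases X) auto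
    have reach1: "steps P1 [A0] X1"
      using step.prems(1) step_imp_steps[OF step.hyps(1)] by (rule steps_trans)
    have refuted1: "steps P1 X1 []" using step.hyps(2) by (simp add: steps_def)
    from step.prems(2)[unfolded X] show ?case
    proof (cases rule: nonunif_sim_Cons_leftE)
      case (kept Ds Y')
      obtain Y1 where "step P2 (a # Y') Y1" and "hoisted X1 Y1"
        using step_P1_simulated step.hyps(1) step.prems(1) assms(3,4) refuted1 kept(3)
        unfolding X by blast
      then have "steps P2 (a # Y') []"
        using step.IH[OF reach1] step_imp_steps steps_trans by blast
      then show ?thesis
        using kept(1,2) steps_nonunif_neqs steps_trans by blast
    next
      case (deleted Ds Y')
      then have "X1 = Xr"
        using step.hyps(1) X step_neqD nonunif_neq_is_neq by blast
      then have "steps P2 Y' []"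
        using deleted(5) step.IH[OF reach1] by simp
      then show ?thesis
        using deleted(1,2) steps_nonunif_neqs steps_trans by blast
    qed
  qed
qed

lemma succeeds_P1_imp_P2:
  assumes "nonbasic A" and "atom_sat A M" and "succeeds [A] P1"
  shows "succeeds [A] P2"
  using refutation_P1_imp_P2[OF _ steps_refl assms(1,2) nonunif_sim_refl] assms(3)
  by (simp add: succeeds_def)

subsection \<open>Derivations in \<open>P2\<close> are tracked in \<open>P1\<close>\<close>

text \<open>\<open>P1\<close> renames the locals of the disequation apart from everything the \<open>P2\<close>-derivation will
  ever use, so its extra copy of the disequation cannot clash with later \<open>P2\<close>-renamings.\<close>

lemma fresh_renaming_C1:
  assumes fin: "finite V" and inj: "inj \<rho>" and within: "\<rho> ` cvars C1 \<subseteq> V"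
    and fresh: "\<rho> ` cvars C1 \<inter> gvars (a # W2) = {}" and vars: "gvars (a # W1) \<inter> V \<subseteq> gvars (a # W2)"
  obtains \<rho>1 where "inj \<rho>1" and "\<forall>x\<in>shared. \<rho>1 x = \<rho> x" and "\<rho>1 ` locals \<inter> V = {}"
    and "\<rho>1 ` cvars C1 \<inter> gvars (a # W1) = {}"
proof -
  have "finite shared" "finite (V \<union> gvars (a # W1))" using fin by (simp_all add: shared_def)
  with inj obtain \<rho>1 where \<rho>1: "inj \<rho>1" "\<forall>x\<in>shared. \<rho>1 x = \<rho> x"
    and \<rho>1_fresh: "\<forall>x. x \<notin> shared \<longrightarrow> \<rho>1 x \<notin> V \<union> gvars (a # W1)"
    by (rule inj_extend_fresh)
  have "\<rho>1 x \<notin> gvars (a # W1)" if "x \<in> cvars C1" for x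
  proof (cases "x \<in> shared")
    case True
    then have "\<rho>1 x \<in> V" "\<rho>1 x \<notin> gvars (a # W2)"
      using \<rho>1(2) within fresh that by auto
    then show ?thesis using vars by blast
  next
    case False
    then show ?thesis using \<rho>1_fresh by blast
  qed
  moreover have "\<rho>1 ` locals \<inter> V = {}"
    using \<rho>1_fresh locals_disjoint_shared by blast
  ultimately show thesis using \<rho>1 by (intro that) auto
qed

text \<open>Both renamings instantiate the input variables of the disequation to the same ground
  terms and leave its locals as distinct variables.\<close>

lemma resolved_neq_rename:
  assumes sat_a: "atom_sat a M" and inj: "inj \<rho>" and inj1: "inj \<rho>1"
    and agree: "\<forall>x\<in>shared. \<rho>1 x = \<rho> x"
    and eqs: "atom_eqs a (hd_atom (rename_clause \<rho> C1)) = Some E" and mgu: "is_mgu \<theta> E"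
    and fresh: "\<rho> ` cvars C1 \<inter> gvars (a # W) = {}" and fresh1: "\<rho>1 ` cvars C1 \<inter> gvars (a # W1) = {}"
  shows "asubst diseq (\<lambda>x. \<theta> (\<rho>1 x))
    = asubst (asubst diseq (\<lambda>x. \<theta> (\<rho> x))) (\<lambda>y. Var (\<rho>1 (inv \<rho> y)))"
  unfolding asubst_asubst
proof (rule asubst_cong)
  fix x assume x: "x \<in> avars diseq"
  have eqs1: "atom_eqs a (hd_atom (rename_clause \<rho>1 C1)) = Some E"
    using eqs hd_atom_rename_C1_cong[OF agree] by simp
  show "\<theta> (\<rho>1 x) = tsubst (\<theta> (\<rho> x)) (\<lambda>y. Var (\<rho>1 (inv \<rho> y)))"
  proof (cases "x \<in> locals")
    case True
    then show ?thesis
      using resolved_local_unchanged[OF inj eqs mgu fresh]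
        resolved_local_unchanged[OF inj1 eqs1 mgu fresh1] inj by simp
  next
    case False
    then show ?thesis
      using resolved_input_ground[OF inj eqs mgu fresh sat_a x] x not_local_input_var agree
      by (simp add: ground_tsubst)
  qed
qed

lemma C2_resolution_simulated:
  assumes fin: "finite V" and sat_a: "atom_sat a M" and inj: "inj \<rho>"
    and eqs: "atom_eqs a (hd_atom (rename_clause \<rho> C1)) = Some E" and mgu: "is_mgu \<theta> E"
    and fresh: "\<rho> ` cvars C1 \<inter> gvars (a # W2) = {}" and within: "\<rho> ` cvars C1 \<subseteq> V"
    and vars: "gvars (a # W1) \<inter> V \<subseteq> gvars (a # W2)"
  obtains B1 where "step P1 (a # W1) (B1 @ gsubst W1 \<theta>)"
    and "bodies_track V (gsubst W2 \<theta>) B1 (gsubst (bd (rename_clause \<rho> C2)) \<theta>)"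
proof -
  obtain \<rho>1 where \<rho>1: "inj \<rho>1" "\<forall>x\<in>shared. \<rho>1 x = \<rho> x" and locals_V: "\<rho>1 ` locals \<inter> V = {}"
    and fresh1: "\<rho>1 ` cvars C1 \<inter> gvars (a # W1) = {}"
    using fresh_renaming_C1[OF fin inj within fresh vars] .
  let ?g = "\<lambda>G. gsubst G (\<lambda>x. \<theta> (\<rho> x))"
    and ?D1 = "asubst diseq (\<lambda>x. \<theta> (\<rho>1 x))" and ?D2 = "asubst diseq (\<lambda>x. \<theta> (\<rho> x))"
  have eqs1: "atom_eqs a (hd_atom (rename_clause \<rho>1 C1)) = Some E"
    using eqs hd_atom_rename_C1_cong[OF \<rho>1(2)] by simp
  have "nonbasic a" using sat_a by (cases a) auto
  then have "step P1 (a # W1) (gsubst (bd (rename_clause \<rho>1 C1) @ W1) \<theta>)"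
    using C1_in_P1 \<rho>1(1) fresh1 eqs1 mgu by (intro step.res) (auto simp: cvars_rename_clause)
  moreover have "gsubst G (\<lambda>x. \<theta> (\<rho>1 x)) = ?g G" if "G \<in> {G1, G2, G3}" for G
    using \<rho>1(2) that by (auto simp: shared_def intro!: gsubst_cong)
  ultimately have step: "step P1 (a # W1) ((?g G1 @ ?g G2 @ ?D1 # ?g G3) @ gsubst W1 \<theta>)"
    unfolding resolvent_C1 by simp
  have D1_V: "avars ?D1 \<inter> V = {}"
    using resolved_neq_vars[OF \<rho>1(1) eqs1 mgu fresh1 sat_a] locals_V by blast
  have "bodies_track V (gsubst W2 \<theta>) (?g G1 @ ?g G2 @ ?D1 # ?g G3) (?g G1 @ ?D2 # ?g G2 @ ?g G3)"
  proof (cases "nonunif_neq ?D2")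
    case True
    then have "nonunif_neq ?D1"
      using resolved_neq_rename[OF sat_a inj \<rho>1(1,2) eqs mgu fresh fresh1]
      by (metis nonunif_neq_asubst)
    from nonunif_sim_refl this D1_V have "hoisted_apart V (?D1 # ?g G3) (?g G3)"
      by (rule nonunif_sim.del)
    then have "hoisted_apart V (?g G2 @ ?D1 # ?g G3) (?D2 # ?g G2 @ ?g G3)"
      using True by (intro nonunif_sim.ins) (auto dest: nonunif_sim_append_left)
    then show ?thesis
      unfolding bodies_track_def by (blast intro: nonunif_sim_append_left)
  next
    case False
    then have "blocking_neq ?D2 (?g G1 @ ?g G2 @ ?g G3 @ gsubst W2 \<theta>)"
      using resolved_neq_private[OF inj eqs mgu fresh sat_a] by (simp add: blocking_neq_def)
    then show ?thesis
      unfolding bodies_track_def using D1_V by blast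
  qed
  then show thesis
    using step resolvent_C2[of \<rho> "[]" \<theta>] by (intro that) simp_all
qed

lemma step_P2_simulated:
  assumes fin: "finite V" and reach: "steps P1 [A0] (a # W1)" "nonbasic A0" "atom_sat A0 M"
    and vars: "gvars (a # W1) \<inter> V \<subseteq> gvars (a # W2)" and step: "step_within P2 V (a # W2) Y'"
  obtains \<theta> S B1 B2 where "step P1 (a # W1) (B1 @ gsubst W1 \<theta>)" and "Y' = B2 @ gsubst W2 \<theta>"
    and "moves_within \<theta> (avars a \<union> S)" and "avars a \<union> S \<subseteq> V" and "S \<inter> gvars (a # W2) = {}"
    and "gvars B2 \<subseteq> avars a \<union> S" and "bodies_track V (gsubst W2 \<theta>) B1 B2"
  using step
proof cases
  case (eq \<theta> s t)
  then have "step P1 (a # W1) ([] @ gsubst W1 \<theta>)" using step.eq[OF eq(3), of P1 W1] by simp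
  moreover have "moves_within \<theta> (avars a \<union> {})"
    using eq mgu_moves_within[OF eq(3)] by (simp add: eqvars_def)
  ultimately show thesis
    using that[of "[]" \<theta> "[]" "{}"] eq by (simp add: bodies_track_refl)
next
  case (neq s t)
  then have "step P1 (a # W1) ([] @ gsubst W1 Var)" by (auto intro: step.neq)
  then show thesis
    using that[of "[]" Var "[]" "{}"] neq by (simp add: moves_within_def bodies_track_refl)
next
  case (res C \<rho> C' E \<theta>)
  have \<theta>: "moves_within \<theta> (avars a \<union> cvars C')"
    using mgu_moves_within[OF res(8)]
    by (rule moves_within_mono) (use eqvars_atom_eqs[OF res(7)] in \<open>auto simp: cvars_def\<close>)
  have B2: "gvars (gsubst (bd C') \<theta>) \<subseteq> avars a \<union> cvars C'"
    using gvars_gsubst_moves_within[OF \<theta>] by (auto simp: cvars_def)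
  have S: "avars a \<union> cvars C' \<subseteq> V" "cvars C' \<inter> gvars (a # W2) = {}"
    using res by auto
  show thesis
  proof (cases "C \<in> P1")
    case True
    have "cvars C' \<inter> gvars (a # W1) = {}" using res vars by auto
    then have "step P1 (a # W1) (gsubst (bd C') \<theta> @ gsubst W1 \<theta>)"
      using res True step.res[of a C P1 \<rho> C' W1 E \<theta>] by simp
    then show thesis
      using that[OF _ _ \<theta> S B2 bodies_track_refl] res by simp
  next
    case False
    then have "C = C2" using P2_cases res(3) by blast
    moreover have "atom_sat a M" using reachable_atom_sat[OF reach res(2)] .
    ultimately obtain B1 where "step P1 (a # W1) (B1 @ gsubst W1 \<theta>)"
      and "bodies_track V (gsubst W2 \<theta>) B1 (gsubst (bd C') \<theta>)"
      using C2_resolution_simulated[OF fin _ res(4) _ res(8) _ _ vars] res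
      by (auto simp: hd_atom_rename_clause hd_atom_C2 cvars_rename_clause cvars_C2)
    then show thesis
      using that[OF _ _ \<theta> S B2] res by simp
  qed
qed

lemma tracks_step:
  assumes fin: "finite V" and reach: "steps P1 [A0] X" "nonbasic A0" "atom_sat A0 M"
    and tr: "tracks V X Y" and step: "step_within P2 V Y Y'"
  obtains X' where "steps P1 X X'" and "tracks V X' Y'"
proof -
  from tr obtain X1 X2 Y1 Y2 where X: "X = X1 @ Y1" and Y: "Y = X2 @ Y2"
    and hoisted: "hoisted_apart V X1 X2" and tail_vars: "gvars Y1 \<inter> V \<subseteq> gvars Y2"
    and tail: "blocked_tail X2 Y1 Y2"
    unfolding tracks_def by blast
  have step': "step P2 Y Y'" using step by (rule step_within_imp_step)
  obtain a X2' where X2: "X2 = a # X2'"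
  proof (cases X2)
    case Nil
    then show thesis
      using tail step' Y no_step_Nil step_neqD by (fastforce simp: blocked_tail_def blocking_neq_def)
  qed
  from hoisted[unfolded X2] show thesis
  proof (cases rule: nonunif_sim_Cons_rightE)
    case (kept Ds X1')
    have to_a: "steps P1 X (a # X1' @ Y1)"
      using kept(1,2) X steps_nonunif_neqs[of Ds P1 "a # X1' @ Y1"] by auto
    have "gvars X1' \<inter> V \<subseteq> gvars X2'"
      using kept(3) by (rule nonunif_sim_gvars_inter)
    then have "gvars (a # X1' @ Y1) \<inter> V \<subseteq> gvars (a # X2' @ Y2)"
      using tail_vars by auto
    then obtain \<theta> S B1 B2 where step1: "step P1 (a # X1' @ Y1) (B1 @ gsubst (X1' @ Y1) \<theta>)"
      and Y': "Y' = B2 @ gsubst (X2' @ Y2) \<theta>" and \<theta>: "moves_within \<theta> (avars a \<union> S)"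
      and S: "avars a \<union> S \<subseteq> V" "S \<inter> gvars (a # X2' @ Y2) = {}" and B2: "gvars B2 \<subseteq> avars a \<union> S"
      and bodies: "bodies_track V (gsubst (X2' @ Y2) \<theta>) B1 B2"
      using step_P2_simulated[OF fin steps_trans[OF reach(1) to_a] reach(2,3)] step X2 Y
      by (metis append_Cons)
    have "tracks V (B1 @ gsubst (X1' @ Y1) \<theta>) Y'"
      unfolding Y' using kept(3) tail_vars tail[unfolded X2] \<theta> S B2 bodies
      by (rule tracks_resolvent)
    then show thesis
      using to_a step_imp_steps[OF step1] steps_trans that by blast
  next
    case inserted
    then have "Y' = X2' @ Y2"
      using step' X2 Y step_neqD nonunif_neq_is_neq by fastforce
    moreover have "tracks V X (X2' @ Y2)"
      using tracksI[OF inserted(2) tail_vars blocked_tail_Cons] tail X X2 by simp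
    ultimately show thesis using that steps_refl by blast
  qed
qed

lemma tracks_steps:
  assumes "(step_within P2 V)\<^sup>*\<^sup>* Y Y'" and "finite V"
    and "steps P1 [A0] X" "nonbasic A0" "atom_sat A0 M" and "tracks V X Y"
  obtains X' where "steps P1 X X'" and "tracks V X' Y'"
  using assms(1) that
proof (induction arbitrary: thesis rule: rtranclp_induct)
  case base
  then show ?case using assms(6) steps_refl by blast
next
  case (step Y1 Y2)
  obtain X1 where "steps P1 X X1" and "tracks V X1 Y1" using step.IH by blast
  moreover have "steps P1 [A0] X1" using assms(3) \<open>steps P1 X X1\<close> by (rule steps_trans)
  ultimately obtain X2 where "steps P1 X1 X2" and "tracks V X2 Y2"
    using tracks_step[OF assms(2) _ assms(4,5) _ step.hyps(2)] by blast
  then show ?case using step.prems \<open>steps P1 X X1\<close> steps_trans by blast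
qed

lemma P2_sat: "prog_sat P2 M"
  unfolding prog_sat_def
proof (intro allI impI)
  fix A0 A G
  assume A0: "nonbasic A0" "atom_sat A0 M" and reach: "steps P2 [A0] (A # G)" and A: "nonbasic A"
  obtain V where "finite V" and "(step_within P2 V)\<^sup>*\<^sup>* [A0] (A # G)"
    using steps_imp_steps_within[OF reach] by blast
  then obtain X where "steps P1 [A0] X" and "tracks V X (A # G)"
    using tracks_steps steps_refl A0 tracks_refl by metis
  moreover obtain X' where "steps P1 X (A # X')"
    using tracks_Cons_nonbasicD[OF \<open>tracks V X (A # G)\<close> A] .
  ultimately show "atom_sat A M"
    using reachable_atom_sat[OF _ A0 A] steps_trans by blast
qed

lemma succeeds_P2_imp_P1:
  assumes "nonbasic A" and "atom_sat A M" and "succeeds [A] P2"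
  shows "succeeds [A] P1"
proof -
  obtain V where "finite V" and "(step_within P2 V)\<^sup>*\<^sup>* [A] []"
    using steps_imp_steps_within assms(3) unfolding succeeds_def by blast
  then obtain X where "steps P1 [A] X" and "tracks V X []"
    using tracks_steps steps_refl assms(1,2) tracks_refl by metis
  moreover have "steps P1 X []"
    using tracks_Nil_rightD[OF \<open>tracks V X []\<close>] steps_nonunif_neqs[of X P1 "[]"] by simp
  ultimately show ?thesis unfolding succeeds_def using steps_trans by blast
qed

end

theorem proposition1:
  fixes P1 :: "('p, 'f::infinite) clause set" and M :: "'p mode"
    and H :: "'p \<times> 'f term list" and G1 G2 G3 :: "('p, 'f) goal"
    and t1 t2 :: "'f term"
  assumes "mode_for_program M P1"
    and "prog_safe P1 M"
    and "prog_sat P1 M"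
    and "(H, G1 @ G2 @ [Neq t1 t2] @ G3) \<in> P1"
    and "P2 = (P1 - {(H, G1 @ G2 @ [Neq t1 t2] @ G3)}) \<union> {(H, G1 @ [Neq t1 t2] @ G2 @ G3)}"
  shows "prog_safe P2 M \<and> prog_sat P2 M \<and>
         (\<forall>A. nonbasic A \<longrightarrow> atom_sat A M \<longrightarrow> (succeeds [A] P1 \<longleftrightarrow> succeeds [A] P2))"
proof -
  interpret neq_shift P1 P2 M H G1 G2 G3 t1 t2
    using assms by unfold_locales
  show ?thesis
    using P2_safe P2_sat succeeds_P1_imp_P2 succeeds_P2_imp_P1 by blast
qed

end
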